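(* Let $\mathcal{X},\mathcal{Y}$ be finite-dimensional real Hilbert spaces, $\mathcal{A}:\mathcal{X}\to\mathcal{Y}$ linear, $\mathcal{R}:\mathcal{X}\to\mathbb{R}$ $\rho$-weakly convex, and $F:\mathcal{Y}\to\mathbb{R}\cup\{+\infty\}$ proper, convex and lower semicontinuous with convex conjugate $F^*$ being $\mu$-strongly convex. Let $(z^k)=(x^k,y^k)$ be generated by the PDHGM iteration with $\vartheta=1$ and step sizes $\tau,\sigma>0$ satisfying $\tau\sigma\|\mathcal{A}\|^2<1$, $\tau\rho<1$ and $\mu\sigma>3$. Then for every $k\ge1$, \[ \mathcal{L}(z^{k},z^{k-1})-\mathcal{L}(z^{k+1},z^{k})\geqslant \frac{1}{2}(\mu\sigma-3)\|y^{k}-y^{k+1}\|_{M}^2 +\frac{1}{2}(1-\rho\tau)\|x^{k}-x^{k+1}\|_{M}^2 . \]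
   Context: $f$ is $\rho$-weakly convex ($\rho\ge0$) if $f+\frac{\rho}{2}\|\cdot\|^2$ is convex, and $\mu$-strongly convex ($\mu>0$) if $f-\frac{\mu}{2}\|\cdot\|^2$ is convex. $F^*(y)=\sup_{w\in\mathcal{Y}}\{\langle y,w\rangle-F(w)\}$. $\mathcal{A}^*$ is the adjoint and $\|\mathcal{A}\|$ the operator norm. The saddle function is $L(x,y)=\mathcal{R}(x)+\langle\mathcal{A}x,y\rangle_{\mathcal{Y}}-F^*(y)$. PDHGM with $\vartheta=1$: from $z^0=(x^0,y^0)$, $x^{k+1}=\operatorname{argmin}_x\{\mathcal{R}(x)+\langle y^k,\mathcal{A}x\rangle+\frac{1}{2\tau}\|x-x^k\|^2\}$, $x_\vartheta^{k+1}=x^{k+1}+(x^{k+1}-x^k)$, $y^{k+1}=\operatorname{argmin}_y\{F^*(y)-\langle y,\mathcal{A}x_\vartheta^{k+1}\rangle+\frac{1}{2\sigma}\|y-y^k\|^2\}$. For $z=(x,y)$, $\|z\|_M^2=\frac1\tau\|x\|^2-2\langle\mathcal{A}x,y\rangle+\frac1\sigma\|y\|^2$ (i.e. $\langle z,Mz\rangle$ with $M=\begin{pmatrix}\frac1\tau I&-\mathcal{A}^*\\-\mathcal{A}&\frac1\sigma I\end{pmatrix}$); for $x\in\mathcal{X}$, $\|x\|_M=\|x\|/\sqrt\tau$, and for $y\in\mathcal{Y}$, $\|y\|_M=\|y\|/\sqrt\sigma$. The Lyapunov function is $\mathcal{L}(z,z')=L(z)+\frac12\|z'-z\|_M^2$.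 *)

theory Defs
  imports "HOL-Analysis.Analysis"
begin

definition ext_convex :: "('b::real_vector \<Rightarrow> ereal) \<Rightarrow> bool" where
  "ext_convex f \<longleftrightarrow> (\<forall>u v t. 0 < t \<and> t < 1 \<longrightarrow>
      f ((1 - t) *\<^sub>R u + t *\<^sub>R v) \<le> ereal (1 - t) * f u + ereal t * f v)"

definition ext_proper :: "('b \<Rightarrow> ereal) \<Rightarrow> bool" where
  "ext_proper f \<longleftrightarrow> (\<forall>u. f u \<noteq> -\<infinity>) \<and> (\<exists>u. f u \<noteq> \<infinity>)"

definition ext_lsc :: "('b::topological_space \<Rightarrow> ereal) \<Rightarrow> bool" where
  "ext_lsc f \<longleftrightarrow> (\<forall>c::real. closed {u. f u \<le> ereal c})"

definition conj_fun :: "('b::real_inner \<Rightarrow> ereal) \<Rightarrow> 'b \<Rightarrow> ereal" where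
  "conj_fun F y = (SUP w. ereal (y \<bullet> w) - F w)"

definition weakly_convex :: "real \<Rightarrow> ('a::real_normed_vector \<Rightarrow> real) \<Rightarrow> bool" where
  "weakly_convex \<rho> f \<longleftrightarrow> convex_on UNIV (\<lambda>x. f x + \<rho> / 2 * (norm x)\<^sup>2)"

definition strongly_convex_ext :: "real \<Rightarrow> ('b::real_normed_vector \<Rightarrow> ereal) \<Rightarrow> bool" where
  "strongly_convex_ext \<mu> f \<longleftrightarrow> ext_convex (\<lambda>u. f u - ereal (\<mu> / 2 * (norm u)\<^sup>2))"

definition saddleL :: "('a \<Rightarrow> real) \<Rightarrow> ('a \<Rightarrow> 'b::real_inner) \<Rightarrow> ('b \<Rightarrow> ereal) \<Rightarrow> 'a \<Rightarrow> 'b \<Rightarrow> ereal" where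
  "saddleL R A F x y = ereal (R x + A x \<bullet> y) - conj_fun F y"

definition Mnorm_sq :: "real \<Rightarrow> real \<Rightarrow> ('a::real_normed_vector \<Rightarrow> 'b::real_inner) \<Rightarrow> 'a \<Rightarrow> 'b \<Rightarrow> real" where
  "Mnorm_sq \<tau> \<sigma> A x y = (1/\<tau>) * (norm x)\<^sup>2 - 2 * (A x \<bullet> y) + (1/\<sigma>) * (norm y)\<^sup>2"

definition lyap :: "('a::real_normed_vector \<Rightarrow> real) \<Rightarrow> ('a \<Rightarrow> 'b::real_inner) \<Rightarrow> ('b \<Rightarrow> ereal)
    \<Rightarrow> real \<Rightarrow> real \<Rightarrow> 'a \<Rightarrow> 'b \<Rightarrow> 'a \<Rightarrow> 'b \<Rightarrow> ereal" where
  "lyap R A F \<tau> \<sigma> x y x' y' = saddleL R A F x y + ereal (1/2 * Mnorm_sq \<tau> \<sigma> A (x' - x) (y' - y))"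

end

theory Submission
  imports Defs
begin

(*
  Both half-steps of PDHGM minimise strongly convex functions: the primal objective
  R + <y^k, A .> + |. - x^k|^2 / (2 tau) has modulus 1/tau - rho, the dual objective
  F^* - <., A (2 x^k - x^(k-1))> + |. - y^(k-1)|^2 / (2 sigma) has modulus mu + 1/sigma.
  A minimiser of such a function satisfies a three-point inequality; we use it for the
  primal step producing x^(k+1), tested at x^k, and for the dual step producing y^k,
  tested at y^(k+1). Adding the two, the Lyapunov difference is bounded below up to the
  cross term <A (x^k - x^(k-1)), (y^k - y^(k-1)) - (y^(k+1) - y^k)>, which Young's
  inequality together with tau sigma |A|^2 < 1 absorbs into the M-norm of the previous
  increment.
*)

lemma norm_convex_comb_sq:
  fixes u v :: "'a::real_inner"
  shows "(norm ((1 - t) *\<^sub>R u + t *\<^sub>R v))\<^sup>2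
         = (1 - t) * (norm u)\<^sup>2 + t * (norm v)\<^sup>2 - t * (1 - t) * (norm (u - v))\<^sup>2"
  by (simp add: power2_norm_eq_inner inner_commute algebra_simps)

lemma convex_on_linear:
  assumes "linear g" and "convex S"
  shows "convex_on S g"
  using assms by (intro convex_onI) (simp_all add: linear_add linear_scale)

lemma strongly_convex_minimizer_growth:
  fixes \<Phi> :: "'a::real_inner \<Rightarrow> real"
  assumes cvx: "convex_on S (\<lambda>w. \<Phi> w - m / 2 * (norm w)\<^sup>2)"
    and z: "z \<in> S" and v: "v \<in> S" and min: "\<And>w. w \<in> S \<Longrightarrow> \<Phi> z \<le> \<Phi> w"
  shows "\<Phi> z + m / 2 * (norm (v - z))\<^sup>2 \<le> \<Phi> v"
proof -
  let ?d = "(norm (z - v))\<^sup>2"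
  \<comment> \<open>compare z with the points of the segment towards v, then let them tend to z\<close>
  have bound: "\<Phi> z \<le> \<Phi> v - m / 2 * ?d * (1 - t)" if t: "t \<in> {0<..<1}" for t
  proof -
    let ?w = "(1 - t) *\<^sub>R z + t *\<^sub>R v"
    have "?w \<in> S"
      using convex_on_imp_convex[OF cvx] z v t by (simp add: convex_alt)
    have "\<Phi> ?w - m / 2 * (norm ?w)\<^sup>2
          \<le> (1 - t) * (\<Phi> z - m / 2 * (norm z)\<^sup>2) + t * (\<Phi> v - m / 2 * (norm v)\<^sup>2)"
      using convex_onD[OF cvx, of t z v] z v t by simp
    then have "\<Phi> ?w \<le> (1 - t) * \<Phi> z + t * \<Phi> v - m / 2 * t * (1 - t) * ?d"
      unfolding norm_convex_comb_sq by (simp add: field_simps)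
    with min[OF \<open>?w \<in> S\<close>] have "t * \<Phi> z \<le> t * (\<Phi> v - m / 2 * ?d * (1 - t))"
      by (simp add: algebra_simps)
    then show ?thesis
      using t by simp
  qed
  have "((\<lambda>t. \<Phi> v - m / 2 * ?d * (1 - t)) \<longlongrightarrow> \<Phi> v - m / 2 * ?d * (1 - 0)) (at_right 0)"
    by (intro tendsto_intros)
  then have "\<Phi> z \<le> \<Phi> v - m / 2 * ?d"
    using eventually_mono[OF eventually_at_right_real[of 0 1] bound]
    by (auto intro: tendsto_lowerbound)
  then show ?thesis
    by (simp add: norm_minus_commute)
qed

lemma convex_on_prox_objective:
  fixes f :: "'a::real_inner \<Rightarrow> real"
  assumes cvx: "convex_on S (\<lambda>w. f w - m / 2 * (norm w)\<^sup>2)" and lin: "linear g"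
  shows "convex_on S (\<lambda>w. f w + g w + 1 / (2 * c) * (norm (w - w0))\<^sup>2 - (m + 1 / c) / 2 * (norm w)\<^sup>2)"
proof -
  have "convex S"
    using convex_on_imp_convex[OF cvx] .
  have "linear (\<lambda>w. g w - (w \<bullet> w0) / c)"
    using lin by (intro linearI) (simp_all add: linear_add linear_scale inner_add_left
        add_divide_distrib algebra_simps)
  then have "convex_on S (\<lambda>w. (g w - (w \<bullet> w0) / c) + (norm w0)\<^sup>2 / (2 * c))"
    using convex_on_add[OF convex_on_linear[OF _ \<open>convex S\<close>]] \<open>convex S\<close>
    by (simp add: convex_on_const)
  then have "convex_on S (\<lambda>w. (f w - m / 2 * (norm w)\<^sup>2) + ((g w - (w \<bullet> w0) / c) + (norm w0)\<^sup>2 / (2 * c)))"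
    by (rule convex_on_add[OF cvx])
  moreover have "(\<lambda>w. f w + g w + 1 / (2 * c) * (norm (w - w0))\<^sup>2 - (m + 1 / c) / 2 * (norm w)\<^sup>2)
      = (\<lambda>w. (f w - m / 2 * (norm w)\<^sup>2) + ((g w - (w \<bullet> w0) / c) + (norm w0)\<^sup>2 / (2 * c)))"
    by (simp add: power2_norm_eq_inner inner_commute algebra_simps add_divide_distrib diff_divide_distrib)
  ultimately show ?thesis
    by simp
qed

lemma prox_three_point:
  fixes f :: "'a::real_inner \<Rightarrow> real"
  assumes cvx: "convex_on S (\<lambda>w. f w - m / 2 * (norm w)\<^sup>2)" and lin: "linear g"
    and z: "z \<in> S" and v: "v \<in> S"
    and min: "\<And>w. w \<in> S \<Longrightarrow> f z + g z + 1 / (2 * c) * (norm (z - w0))\<^sup>2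
                                \<le> f w + g w + 1 / (2 * c) * (norm (w - w0))\<^sup>2"
  shows "f z + m / 2 * (norm (v - z))\<^sup>2 \<le> f v + g (v - z) + (v - z) \<bullet> (z - w0) / c"
proof -
  have "f z + g z + 1 / (2 * c) * (norm (z - w0))\<^sup>2 + (m + 1 / c) / 2 * (norm (v - z))\<^sup>2
      \<le> f v + g v + 1 / (2 * c) * (norm (v - w0))\<^sup>2"
    using convex_on_prox_objective[OF cvx lin] z v min
    by (rule strongly_convex_minimizer_growth)
  moreover have "1 / (2 * c) * (norm (v - w0))\<^sup>2
      = 1 / (2 * c) * (norm (v - z))\<^sup>2 + (v - z) \<bullet> (z - w0) / c + 1 / (2 * c) * (norm (z - w0))\<^sup>2"
  proof -
    have "(norm (v - w0))\<^sup>2 = (norm (v - z))\<^sup>2 + 2 * ((v - z) \<bullet> (z - w0)) + (norm (z - w0))\<^sup>2"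
      using dot_norm[of "v - z" "z - w0"] by simp
    moreover have "1 / (2 * c) * (D + 2 * X + Z) = 1 / (2 * c) * D + X / c + 1 / (2 * c) * Z" for D X Z
      by (simp add: algebra_simps add_divide_distrib)
    ultimately show ?thesis
      by (simp only:)
  qed
  moreover have "(m + 1 / c) / 2 * (norm (v - z))\<^sup>2 = m / 2 * (norm (v - z))\<^sup>2 + 1 / (2 * c) * (norm (v - z))\<^sup>2"
    by (simp add: algebra_simps add_divide_distrib)
  moreover have "g (v - z) = g v - g z"
    using lin by (rule linear_diff)
  ultimately show ?thesis
    by linarith
qed

lemma convex_on_cong:
  assumes "convex_on S f" and "\<And>x. x \<in> S \<Longrightarrow> f x = g x"
  shows "convex_on S g"
  using assms convexD[OF convex_on_imp_convex[OF assms(1)]] unfolding convex_on_def by metis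

lemma ext_convex_real_on_domain:
  assumes cvx: "ext_convex g" and no_minf: "\<And>u. g u \<noteq> -\<infinity>"
  shows "convex_on {u. g u \<noteq> \<infinity>} (\<lambda>u. real_of_ereal (g u))"
proof -
  have comb: "g ((1 - t) *\<^sub>R u + t *\<^sub>R v) \<le> ereal ((1 - t) * real_of_ereal (g u) + t * real_of_ereal (g v))"
    if t: "t \<in> {0<..<1}" and fin: "g u \<noteq> \<infinity>" "g v \<noteq> \<infinity>" for t u v
  proof -
    have "g ((1 - t) *\<^sub>R u + t *\<^sub>R v) \<le> ereal (1 - t) * g u + ereal t * g v"
      using cvx t unfolding ext_convex_def by simp
    moreover obtain a b where "g u = ereal a" "g v = ereal b"
      using fin no_minf[of u] no_minf[of v] by (cases "g u"; cases "g v") auto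
    ultimately show ?thesis
      by simp
  qed
  have "convex {u. g u \<noteq> \<infinity>}"
    unfolding convex_alt
  proof (intro ballI allI impI)
    fix u v and t :: real
    assume "u \<in> {u. g u \<noteq> \<infinity>}" "v \<in> {u. g u \<noteq> \<infinity>}" "0 \<le> t \<and> t \<le> 1"
    then show "(1 - t) *\<^sub>R u + t *\<^sub>R v \<in> {u. g u \<noteq> \<infinity>}"
      using comb[of t u v] by (cases "t = 0 \<or> t = 1") auto
  qed
  then show ?thesis
  proof (rule convex_onI[rotated])
    fix t :: real and u v
    assume "0 < t" "t < 1" "u \<in> {u. g u \<noteq> \<infinity>}" "v \<in> {u. g u \<noteq> \<infinity>}"
    then have "g ((1 - t) *\<^sub>R u + t *\<^sub>R v) \<le> ereal ((1 - t) * real_of_ereal (g u) + t * real_of_ereal (g v))"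
      by (intro comb) auto
    then show "real_of_ereal (g ((1 - t) *\<^sub>R u + t *\<^sub>R v)) \<le> (1 - t) * real_of_ereal (g u) + t * real_of_ereal (g v)"
      using no_minf[of "(1 - t) *\<^sub>R u + t *\<^sub>R v"] by (cases "g ((1 - t) *\<^sub>R u + t *\<^sub>R v)") auto
  qed
qed

lemma strongly_convex_ext_real_on_domain:
  assumes sc: "strongly_convex_ext \<mu> f" and no_minf: "\<And>u. f u \<noteq> -\<infinity>"
  shows "convex_on {u. f u \<noteq> \<infinity>} (\<lambda>u. real_of_ereal (f u) - \<mu> / 2 * (norm u)\<^sup>2)"
proof -
  have dom: "{u. f u - ereal (\<mu> / 2 * (norm u)\<^sup>2) \<noteq> \<infinity>} = {u. f u \<noteq> \<infinity>}"
    by (simp add: ereal_minus_eq_PInfty_iff)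
  have "convex_on {u. f u \<noteq> \<infinity>} (\<lambda>u. real_of_ereal (f u - ereal (\<mu> / 2 * (norm u)\<^sup>2)))"
    using sc no_minf unfolding strongly_convex_ext_def dom[symmetric]
    by (intro ext_convex_real_on_domain) (auto simp: ereal_diff_eq_MInfty_iff)
  then show ?thesis
  proof (rule convex_on_cong)
    fix u assume "u \<in> {u. f u \<noteq> \<infinity>}"
    then show "real_of_ereal (f u - ereal (\<mu> / 2 * (norm u)\<^sup>2)) = real_of_ereal (f u) - \<mu> / 2 * (norm u)\<^sup>2"
      using no_minf[of u] by (cases "f u") auto
  qed
qed

lemma conj_fun_neq_MInfty:
  assumes "ext_proper F"
  shows "conj_fun F u \<noteq> -\<infinity>"
proof -
  obtain w r where "F w = ereal r"
    using assms unfolding ext_proper_def by (metis ereal_cases)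
  moreover have "ereal (u \<bullet> w) - F w \<le> conj_fun F u"
    unfolding conj_fun_def by (rule SUP_upper) simp
  ultimately show ?thesis
    by auto
qed

lemma weakly_convex_prox_three_point:
  fixes R :: "'a::real_inner \<Rightarrow> real" and A :: "'a \<Rightarrow> 'b::real_inner"
  assumes "linear A" and "weakly_convex \<rho> R"
    and min: "\<And>u. R z + y \<bullet> A z + 1 / (2 * \<tau>) * (norm (z - x0))\<^sup>2
                 \<le> R u + y \<bullet> A u + 1 / (2 * \<tau>) * (norm (u - x0))\<^sup>2"
  shows "R z - \<rho> / 2 * (norm (v - z))\<^sup>2 \<le> R v + y \<bullet> A (v - z) + (v - z) \<bullet> (z - x0) / \<tau>"
proof -
  have "convex_on UNIV (\<lambda>w. R w - (- \<rho>) / 2 * (norm w)\<^sup>2)"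
    using assms(2) unfolding weakly_convex_def by simp
  moreover have "linear (\<lambda>w. y \<bullet> A w)"
    using assms(1) by (intro linearI) (simp_all add: linear_add linear_scale inner_add_right)
  ultimately show ?thesis
    using prox_three_point[where g = "\<lambda>w. y \<bullet> A w"] min by fastforce
qed

lemma strongly_convex_ext_prox_three_point:
  fixes f :: "'b::real_inner \<Rightarrow> ereal"
  assumes sc: "strongly_convex_ext \<mu> f" and no_minf: "\<And>u. f u \<noteq> -\<infinity>"
    and min: "\<And>u. f z - ereal (z \<bullet> c) + ereal (1 / (2 * \<sigma>) * (norm (z - y0))\<^sup>2)
                 \<le> f u - ereal (u \<bullet> c) + ereal (1 / (2 * \<sigma>) * (norm (u - y0))\<^sup>2)"
    and fz: "f z = ereal a" and fv: "f v = ereal b"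
  shows "a + \<mu> / 2 * (norm (v - z))\<^sup>2 \<le> b - (v - z) \<bullet> c + (v - z) \<bullet> (z - y0) / \<sigma>"
proof -
  have lin: "linear (\<lambda>u. - (u \<bullet> c))"
    by (intro linearI) (simp_all add: inner_add_left)
  have "real_of_ereal (f z) + \<mu> / 2 * (norm (v - z))\<^sup>2
      \<le> real_of_ereal (f v) + - ((v - z) \<bullet> c) + (v - z) \<bullet> (z - y0) / \<sigma>"
  proof (rule prox_three_point[OF strongly_convex_ext_real_on_domain[OF sc no_minf] lin])
    fix u
    assume "u \<in> {u. f u \<noteq> \<infinity>}"
    then show "real_of_ereal (f z) + - (z \<bullet> c) + 1 / (2 * \<sigma>) * (norm (z - y0))\<^sup>2
        \<le> real_of_ereal (f u) + - (u \<bullet> c) + 1 / (2 * \<sigma>) * (norm (u - y0))\<^sup>2"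
      using min[of u] fz no_minf[of u] by (cases "f u") auto
  qed (use fz fv in auto)
  then show ?thesis
    using fz fv by simp
qed

lemma inner_le_step_weighted_squares:
  fixes A :: "'a::real_normed_vector \<Rightarrow> 'b::real_inner"
  assumes "bounded_linear A" and tau: "\<tau> > 0" and sigma: "\<sigma> > 0"
    and step: "\<tau> * \<sigma> * (onorm A)\<^sup>2 \<le> 1"
  shows "A p \<bullet> w \<le> (norm p)\<^sup>2 / (2 * \<tau>) + (norm w)\<^sup>2 / (2 * \<sigma>)"
proof -
  let ?P = "norm p" and ?W = "onorm A * norm w"
  have "A p \<bullet> w \<le> norm (A p) * norm w"
    by (rule norm_cauchy_schwarz)
  also have "\<dots> \<le> ?P * ?W"
    using mult_right_mono[OF onorm[OF assms(1), of p] norm_ge_zero[of w]] by (simp add: ac_simps)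
  also have "\<dots> \<le> ?P\<^sup>2 / (2 * \<tau>) + \<tau> / 2 * ?W\<^sup>2"
  proof -
    have "0 \<le> (?P - \<tau> * ?W)\<^sup>2"
      by simp
    then show ?thesis
      using tau by (simp add: field_simps power2_eq_square)
  qed
  also have "\<tau> / 2 * ?W\<^sup>2 \<le> (norm w)\<^sup>2 / (2 * \<sigma>)"
    using mult_right_mono[OF step zero_le_power2[of "norm w"]] tau sigma
    by (simp add: field_simps power_mult_distrib)
  finally show ?thesis
    by simp
qed

lemma pdhg_lyapunov_descent:
  fixes A :: "'a::real_inner \<Rightarrow> 'b::real_inner"
  assumes lin: "linear A" and tau: "\<tau> > 0" and sigma: "\<sigma> > 0"
    and primal: "R x2 - \<rho> / 2 * (norm (x1 - x2))\<^sup>2 \<le> R x1 + y1 \<bullet> A (x1 - x2) + (x1 - x2) \<bullet> (x2 - x1) / \<tau>"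
    and dual: "a + \<mu> / 2 * (norm (y2 - y1))\<^sup>2
               \<le> b - (y2 - y1) \<bullet> A (2 *\<^sub>R x1 - x0) + (y2 - y1) \<bullet> (y1 - y0) / \<sigma>"
    and cross: "A (x1 - x0) \<bullet> ((y1 - y0) - (y2 - y1))
                  \<le> (norm (x1 - x0))\<^sup>2 / (2 * \<tau>) + (norm ((y1 - y0) - (y2 - y1)))\<^sup>2 / (2 * \<sigma>)"
  shows "(R x1 + A x1 \<bullet> y1 - a + 1 / 2 * Mnorm_sq \<tau> \<sigma> A (x0 - x1) (y0 - y1))
           - (R x2 + A x2 \<bullet> y2 - b + 1 / 2 * Mnorm_sq \<tau> \<sigma> A (x1 - x2) (y1 - y2))
         \<ge> 1 / 2 * (\<mu> * \<sigma> - 3) * ((norm (y1 - y2))\<^sup>2 / \<sigma>)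
           + 1 / 2 * (1 - \<rho> * \<tau>) * ((norm (x1 - x2))\<^sup>2 / \<tau>)"
proof -
  define p q u w where "p = x1 - x0" and "q = x2 - x1" and "u = y1 - y0" and "w = y2 - y1"
  then have x: "x0 = x1 - p" "x2 = x1 + q" and y: "y0 = y1 - u" "y2 = y1 + w"
    by simp_all
  note lin_simps = linear_add[OF lin] linear_diff[OF lin] linear_scale[OF lin] linear_neg[OF lin]
  have primal': "R x1 - R x2 \<ge> y1 \<bullet> A q + (norm q)\<^sup>2 / \<tau> - \<rho> / 2 * (norm q)\<^sup>2"
    using primal unfolding x by (simp add: lin_simps power2_norm_eq_inner)
  have dual': "b - a \<ge> w \<bullet> A x1 + w \<bullet> A p - (u \<bullet> w) / \<sigma> + \<mu> / 2 * (norm w)\<^sup>2"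
    using dual unfolding x y by (simp add: lin_simps scaleR_2 inner_add_right inner_commute)
  have coupling: "A x1 \<bullet> y1 - A x2 \<bullet> y2 = - (w \<bullet> A x1) - y1 \<bullet> A q - A q \<bullet> w"
    unfolding x y by (simp add: lin_simps algebra_simps inner_commute)
  have M0: "1 / 2 * Mnorm_sq \<tau> \<sigma> A (x0 - x1) (y0 - y1)
      = (norm p)\<^sup>2 / (2 * \<tau>) - A p \<bullet> u + (norm u)\<^sup>2 / (2 * \<sigma>)"
    and M1: "1 / 2 * Mnorm_sq \<tau> \<sigma> A (x1 - x2) (y1 - y2)
      = (norm q)\<^sup>2 / (2 * \<tau>) - A q \<bullet> w + (norm w)\<^sup>2 / (2 * \<sigma>)"
    unfolding x y Mnorm_sq_def by (simp_all add: lin_simps)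
  have cross': "A p \<bullet> u - w \<bullet> A p
      \<le> (norm p)\<^sup>2 / (2 * \<tau>) + (norm u)\<^sup>2 / (2 * \<sigma>) - (u \<bullet> w) / \<sigma> + (norm w)\<^sup>2 / (2 * \<sigma>)"
  proof -
    have "(norm (u - w))\<^sup>2 = (norm u)\<^sup>2 - 2 * (u \<bullet> w) + (norm w)\<^sup>2"
      by (simp add: power2_norm_eq_inner inner_commute algebra_simps)
    then show ?thesis
      using cross sigma unfolding p_def [symmetric] u_def [symmetric] w_def [symmetric]
      by (simp add: inner_diff_right inner_commute add_divide_distrib diff_divide_distrib)
  qed
  \<comment> \<open>the estimate holds even with \<open>\<mu> * \<sigma> - 2\<close> in place of \<open>\<mu> * \<sigma> - 3\<close>\<close>
  have "1 / 2 * (\<mu> * \<sigma> - 3) * ((norm (y1 - y2))\<^sup>2 / \<sigma>) + 1 / 2 * (1 - \<rho> * \<tau>) * ((norm (x1 - x2))\<^sup>2 / \<tau>)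
      = \<mu> / 2 * (norm w)\<^sup>2 - 3 * ((norm w)\<^sup>2 / (2 * \<sigma>)) + (norm q)\<^sup>2 / (2 * \<tau>) - \<rho> / 2 * (norm q)\<^sup>2"
    using tau sigma unfolding x y by (simp add: field_simps)
  moreover have "(norm q)\<^sup>2 / \<tau> = 2 * ((norm q)\<^sup>2 / (2 * \<tau>))" "(norm w)\<^sup>2 / (2 * \<sigma>) \<ge> 0"
    using sigma by simp_all
  ultimately show ?thesis
    using primal' dual' coupling M0 M1 cross' by linarith
qed

lemma lyap_eq_ereal:
  assumes "conj_fun F y = ereal a"
  shows "lyap R A F \<tau> \<sigma> x y x' y' = ereal (R x + A x \<bullet> y - a + 1 / 2 * Mnorm_sq \<tau> \<sigma> A (x' - x) (y' - y))"
  using assms by (simp add: lyap_def saddleL_def)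

theorem mainTheorem5:
  fixes A :: "'a::euclidean_space \<Rightarrow> 'b::euclidean_space"
    and R :: "'a \<Rightarrow> real"
    and F :: "'b \<Rightarrow> ereal"
    and x :: "nat \<Rightarrow> 'a" and y :: "nat \<Rightarrow> 'b"
    and \<rho> \<mu> \<tau> \<sigma> :: real
  assumes linA: "linear A"
    and rho: "\<rho> \<ge> 0" and wc: "weakly_convex \<rho> R"
    and Fprop: "ext_proper F" and Fconv: "ext_convex F" and Flsc: "ext_lsc F"
    and mu: "\<mu> > 0" and sc: "strongly_convex_ext \<mu> (conj_fun F)"
    and tau: "\<tau> > 0" and sigma: "\<sigma> > 0"
    and step1: "\<tau> * \<sigma> * (onorm A)\<^sup>2 < 1"
    and step2: "\<tau> * \<rho> < 1"
    and step3: "\<mu> * \<sigma> > 3"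
    and xupd: "\<And>k u. R (x (Suc k)) + y k \<bullet> A (x (Suc k)) + 1 / (2 * \<tau>) * (norm (x (Suc k) - x k))\<^sup>2
                 \<le> R u + y k \<bullet> A u + 1 / (2 * \<tau>) * (norm (u - x k))\<^sup>2"
    and yupd: "\<And>k v. conj_fun F (y (Suc k))
                   - ereal (y (Suc k) \<bullet> A (2 *\<^sub>R x (Suc k) - x k))
                   + ereal (1 / (2 * \<sigma>) * (norm (y (Suc k) - y k))\<^sup>2)
                 \<le> conj_fun F v - ereal (v \<bullet> A (2 *\<^sub>R x (Suc k) - x k))
                   + ereal (1 / (2 * \<sigma>) * (norm (v - y k))\<^sup>2)"
    and k: "k \<ge> 1"
  shows "lyap R A F \<tau> \<sigma> (x k) (y k) (x (k - 1)) (y (k - 1))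
           - lyap R A F \<tau> \<sigma> (x (Suc k)) (y (Suc k)) (x k) (y k)
         \<ge> ereal (1/2 * (\<mu> * \<sigma> - 3) * ((norm (y k - y (Suc k)))\<^sup>2 / \<sigma>)
                 + 1/2 * (1 - \<rho> * \<tau>) * ((norm (x k - x (Suc k)))\<^sup>2 / \<tau>))"
proof -
  obtain K where K: "k = Suc K"
    using k by (cases k) auto
  have no_minf: "\<And>u. conj_fun F u \<noteq> -\<infinity>"
    using conj_fun_neq_MInfty[OF Fprop] .
  show ?thesis
  proof (cases "conj_fun F (y (Suc k)) = \<infinity>")
    case True
    \<comment> \<open>the second Lyapunov value is \<open>-\<infinity>\<close>, and \<open>x - -\<infinity> = \<infinity>\<close> in ereal arithmetic\<close>
    then show ?thesis
      by (simp add: lyap_def saddleL_def)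
  next
    case False
    then obtain b where b: "conj_fun F (y (Suc k)) = ereal b"
      using no_minf[of "y (Suc k)"] by (cases "conj_fun F (y (Suc k))") auto
    have "conj_fun F (y k) \<noteq> \<infinity>"
      using yupd[of K "y (Suc k)", folded K] b by auto
    then obtain a where a: "conj_fun F (y k) = ereal a"
      using no_minf[of "y k"] by (cases "conj_fun F (y k)") auto
    have "bounded_linear A"
      using linA by (simp add: linear_conv_bounded_linear)
    from pdhg_lyapunov_descent[OF linA tau sigma
        weakly_convex_prox_three_point[OF linA wc xupd]
        strongly_convex_ext_prox_three_point[OF sc no_minf yupd[of K, folded K] a b]
        inner_le_step_weighted_squares[OF this tau sigma less_imp_le[OF step1]]]
    show ?thesis
      unfolding lyap_eq_ereal[OF a] lyap_eq_ereal[OF b] by (simp add: K)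
  qed
qed

end
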